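(* Let $L=\{(x,\,y,\,y+z): x,y\in B,\ z\in C_8\}\subset E^{24}$. Then $L$ is contained in the set of even-weight words, and $\chi_L$ is a perfect coloring of the halved cube $\tfrac12 H^{0}_{24}$ with parameters $((28,248)(8,268))$.
   Context: $E^n$ is the set of binary words of length $n$ with coordinatewise addition mod $2$. $\tfrac12 H^{0}_{24}$ is the graph on the even-weight words of $E^{24}$, adjacent iff at Hamming distance exactly $2$ (degree $276$). $B\subset E^8$ is the set of even-weight words of length $8$ (the $(8,128,2)$-code containing $00000000$). $C_8\subset E^8$ is the linear span of $11111111$ and of the seven words obtained from $00101110$ by cyclically permuting its first seven coordinates (a linear $(8,16,4)$-code). (The paper writes $C_1$ in the definition of $L$; it denotes an $(8,16,4)$-code such as $C_8$.) For a set $C$, $\chi_C$ is a perfect coloring with parameters $((a,b)(c,d))$ if every vertex of $C$ has exactly $a$ neighbours in $C$ and $b$ outside, and every vertex outside $C$ has exactly $c$ neighbours in $C$ and $d$ outside. *)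

theory Defs
  imports Main
begin

text \<open>Binary words of length n are bool lists of length n (True = 1).\<close>

definition wadd :: "bool list \<Rightarrow> bool list \<Rightarrow> bool list" where
  "wadd u v = map2 (\<noteq>) u v"

definition wt :: "bool list \<Rightarrow> nat" where
  "wt w = length (filter id w)"

definition hdist :: "bool list \<Rightarrow> bool list \<Rightarrow> nat" where
  "hdist u v = wt (wadd u v)"

definition words :: "nat \<Rightarrow> bool list set" where
  "words n = {w. length w = n}"

text \<open>Even-weight words of E^n: vertex set of the halved cube\<close>
definition even_words :: "nat \<Rightarrow> bool list set" where
  "even_words n = {w \<in> words n. even (wt w)}"

definition halved_adj :: "bool list \<Rightarrow> bool list \<Rightarrow> bool" where
  "halved_adj u v \<longleftrightarrow> hdist u v = 2"

inductive_set gf2_span :: "nat \<Rightarrow> bool list set \<Rightarrow> bool list set" for n G where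
  zero: "replicate n False \<in> gf2_span n G"
| add: "g \<in> G \<Longrightarrow> v \<in> gf2_span n G \<Longrightarrow> wadd g v \<in> gf2_span n G"

definition B8 :: "bool list set" where
  "B8 = even_words 8"

definition w00101110 :: "bool list" where
  "w00101110 = [False, False, True, False, True, True, True, False]"

definition shift7 :: "nat \<Rightarrow> bool list \<Rightarrow> bool list" where
  "shift7 k w = rotate k (take 7 w) @ drop 7 w"

definition C8 :: "bool list set" where
  "C8 = gf2_span 8 (insert (replicate 8 True) {shift7 k w00101110 | k. k < 7})"

definition Lcode :: "bool list set" where
  "Lcode = {x @ y @ wadd y z | x y z. x \<in> B8 \<and> y \<in> B8 \<and> z \<in> C8}"

definition perfect_coloring ::
  "'v set \<Rightarrow> ('v \<Rightarrow> 'v \<Rightarrow> bool) \<Rightarrow> 'v set \<Rightarrow> nat \<Rightarrow> nat \<Rightarrow> nat \<Rightarrow> nat \<Rightarrow> bool" where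
  "perfect_coloring V adj C a b c d \<longleftrightarrow>
     (\<forall>v \<in> V \<inter> C. card {u \<in> V. adj v u \<and> u \<in> C} = a \<and> card {u \<in> V. adj v u \<and> u \<notin> C} = b) \<and>
     (\<forall>v \<in> V - C. card {u \<in> V. adj v u \<and> u \<in> C} = c \<and> card {u \<in> V. adj v u \<and> u \<notin> C} = d)"

end

theory Submission
  imports Defs
begin

(* Split a word of E^24 into three blocks a @ b @ c of length 8.  By
   definition of L, a @ b @ c \<in> L iff a and b have even weight and b + c lies in the
   extended Hamming code C8; C8 is described by four parity checks (inC8).
   The neighbours of a vertex v of the halved cube are the words v + w with w of
   weight 2, and the block weights of such a w are (2,0,0), (0,2,0), (0,0,2),
   (1,1,0), (1,0,1) or (0,1,1).  Whether v + w lies in L depends only on the block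
   parities of v, on s = b + c and on w, so counting these neighbours reduces to
   two covering properties of C8, checked by evaluation on the 256 words of
   length 8: a word of odd weight is at distance 1 from exactly one codeword, and a
   word of even weight is at distance 2 from no codeword if it lies in C8 and from
   exactly four codewords otherwise.  The count is 28 for v \<in> L and 8 otherwise;
   the complementary counts follow from the degree 276 of the halved cube. *)

lemma wadd_Cons [simp]: "wadd (a # u) (b # v) = (a \<noteq> b) # wadd u v"
  by (simp add: wadd_def)

lemma wadd_Nil [simp]: "wadd [] v = []" "wadd u [] = []"
  by (simp_all add: wadd_def)

lemma length_wadd [simp]: "length (wadd u v) = min (length u) (length v)"
  by (simp add: wadd_def)

lemma wt_Nil [simp]: "wt [] = 0"
  and wt_Cons [simp]: "wt (a # u) = (if a then Suc (wt u) else wt u)"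
  and wt_append [simp]: "wt (u @ v) = wt u + wt v"
  by (simp_all add: wt_def)

lemma wadd_append: "length u = length x \<Longrightarrow> wadd (u @ v) (x @ y) = wadd u x @ wadd v y"
  by (simp add: wadd_def)

lemma wadd_comm: "wadd u v = wadd v u"
proof (induction u arbitrary: v)
  case (Cons a u)
  then show ?case by (cases v) auto
qed simp

lemma wadd_assoc: "wadd (wadd u v) w = wadd u (wadd v w)"
proof (induction u arbitrary: v w)
  case (Cons a u)
  then show ?case by (cases v; cases w) auto
qed simp

lemma wadd_cancel: "length u = length v \<Longrightarrow> wadd u (wadd u v) = v"
proof (induction u arbitrary: v)
  case (Cons a u)
  then show ?case by (cases v) auto
qed simp

abbreviation zero_word :: "nat \<Rightarrow> bool list" where
  "zero_word m \<equiv> replicate m False"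

lemma wadd_zero: "length u = n \<Longrightarrow> wadd u (zero_word n) = u"
  by (induction u arbitrary: n) auto

lemma wadd_zero_left: "length u = n \<Longrightarrow> wadd (zero_word n) u = u"
  by (induction u arbitrary: n) auto

lemma wt_zero_word [simp]: "wt (zero_word n) = 0"
  by (simp add: wt_def)

lemma even_wt_wadd:
  "length u = length v \<Longrightarrow> even (wt (wadd u v)) \<longleftrightarrow> (even (wt u) \<longleftrightarrow> even (wt v))"
proof (induction u arbitrary: v)
  case (Cons a u)
  then show ?case by (cases v) auto
qed simp

lemma wt_eq_0_iff: "wt u = 0 \<longleftrightarrow> u = zero_word (length u)"
  by (induction u) auto

fun all_words :: "nat \<Rightarrow> bool list list" where
  "all_words 0 = [[]]"
| "all_words (Suc n) = map (Cons False) (all_words n) @ map (Cons True) (all_words n)"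

lemma set_all_words: "set (all_words n) = words n"
proof (induction n)
  case (Suc n)
  have "w \<in> set (all_words (Suc n))" if "length w = Suc n" for w
    using that Suc by (cases w) (auto simp: words_def)
  then show ?case
    using Suc by (auto simp: words_def)
qed (simp add: words_def)

lemma distinct_all_words: "distinct (all_words n)"
  by (induction n) (auto simp: distinct_map)

lemma finite_even_words: "finite (even_words n)"
proof (rule finite_subset)
  show "even_words n \<subseteq> set (all_words n)"
    by (auto simp: even_words_def set_all_words)
qed simp

(* In the halved cube on even words of length n, the neighbours of v are exactly
   the words v + w with w of weight 2, and w \<mapsto> v + w is injective. *)
lemma halved_cube_neighbours:
  assumes v: "v \<in> even_words n"
  shows "card {u \<in> even_words n. halved_adj v u \<and> P u} =
         card {w \<in> words n. wt w = 2 \<and> P (wadd v w)}"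
proof -
  have lv: "length v = n" and ev: "even (wt v)"
    using v by (auto simp: even_words_def words_def)
  have "{u \<in> even_words n. halved_adj v u \<and> P u} = wadd v ` {w \<in> words n. wt w = 2 \<and> P (wadd v w)}"
  proof (intro equalityI subsetI)
    fix u assume u: "u \<in> {u \<in> even_words n. halved_adj v u \<and> P u}"
    then have "length u = n" by (simp add: even_words_def words_def)
    with u lv show "u \<in> wadd v ` {w \<in> words n. wt w = 2 \<and> P (wadd v w)}"
      by (intro image_eqI[of u _ "wadd v u"])
         (auto simp: wadd_cancel words_def halved_adj_def hdist_def)
  next
    fix u assume "u \<in> wadd v ` {w \<in> words n. wt w = 2 \<and> P (wadd v w)}"
    with lv ev show "u \<in> {u \<in> even_words n. halved_adj v u \<and> P u}"
      by (auto simp: even_words_def words_def halved_adj_def hdist_def wadd_cancel even_wt_wadd)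
  qed
  moreover have "inj_on (wadd v) (words n)"
    by (rule inj_on_inverseI[where g = "wadd v"]) (simp add: lv wadd_cancel words_def)
  ultimately show ?thesis
    by (simp add: card_image inj_on_subset[of _ "words n"])
qed

definition weight_one :: "nat \<Rightarrow> bool list list" where
  "weight_one m = filter (\<lambda>e. wt e = 1) (all_words m)"

definition weight_two :: "nat \<Rightarrow> bool list list" where
  "weight_two m = filter (\<lambda>e. wt e = 2) (all_words m)"

lemma mem_weight_one: "e \<in> set (weight_one m) \<longleftrightarrow> length e = m \<and> wt e = 1"
  by (auto simp: weight_one_def set_all_words words_def)

lemma mem_weight_two: "e \<in> set (weight_two m) \<longleftrightarrow> length e = m \<and> wt e = 2"
  by (auto simp: weight_two_def set_all_words words_def)

definition weight_two_blocks :: "nat \<Rightarrow> (bool list \<times> bool list \<times> bool list) list" where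
  "weight_two_blocks m =
     map (\<lambda>x. (x, zero_word m, zero_word m)) (weight_two m) @
     map (\<lambda>y. (zero_word m, y, zero_word m)) (weight_two m) @
     map (\<lambda>z. (zero_word m, zero_word m, z)) (weight_two m) @
     map (\<lambda>(x, y). (x, y, zero_word m)) (List.product (weight_one m) (weight_one m)) @
     map (\<lambda>(x, z). (x, zero_word m, z)) (List.product (weight_one m) (weight_one m)) @
     map (\<lambda>(y, z). (zero_word m, y, z)) (List.product (weight_one m) (weight_one m))"

lemma set_weight_two_blocks:
  "set (weight_two_blocks m) =
     {(x, y, z). length x = m \<and> length y = m \<and> length z = m \<and> wt x + wt y + wt z = 2}"
proof (intro equalityI subsetI)
  fix t assume "t \<in> set (weight_two_blocks m)"
  then show "t \<in> {(x, y, z). length x = m \<and> length y = m \<and> length z = m \<and> wt x + wt y + wt z = 2}"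
    by (auto simp: weight_two_blocks_def mem_weight_one mem_weight_two)
next
  fix t assume "t \<in> {(x, y, z). length x = m \<and> length y = m \<and> length z = m \<and> wt x + wt y + wt z = 2}"
  then obtain x y z where t: "t = (x, y, z)" and l: "length x = m" "length y = m" "length z = m"
    and w: "wt x + wt y + wt z = 2" by auto
  have zero: "wt x = 0 \<Longrightarrow> x = zero_word m" "wt y = 0 \<Longrightarrow> y = zero_word m" "wt z = 0 \<Longrightarrow> z = zero_word m"
    using l by (simp_all add: wt_eq_0_iff)
  have "wt x = 2 \<and> wt y = 0 \<and> wt z = 0 \<or> wt x = 0 \<and> wt y = 2 \<and> wt z = 0 \<or>
        wt x = 0 \<and> wt y = 0 \<and> wt z = 2 \<or> wt x = 1 \<and> wt y = 1 \<and> wt z = 0 \<or>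
        wt x = 1 \<and> wt y = 0 \<and> wt z = 1 \<or> wt x = 0 \<and> wt y = 1 \<and> wt z = 1"
    using w by presburger
  then show "t \<in> set (weight_two_blocks m)"
    unfolding t weight_two_blocks_def
    by (elim disjE conjE) (simp_all add: zero l mem_weight_one mem_weight_two image_iff)
qed

lemma distinct_weight_two_blocks: "distinct (weight_two_blocks m)"
  by (auto simp: weight_two_blocks_def distinct_map distinct_product inj_on_def
      weight_one_def weight_two_def distinct_all_words mem_weight_one mem_weight_two)

lemma split_three_blocks:
  assumes "length w = 3 * m"
  obtains x y z where "w = x @ y @ z" "length x = m" "length y = m" "length z = m"
proof
  show "w = take m w @ take m (drop m w) @ drop (2 * m) w"
    by (metis append_take_drop_id drop_drop mult_2 add.commute)
qed (use assms in auto)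

lemma card_weight_two_words:
  "card {w \<in> words (3 * m). wt w = 2 \<and> Q w} =
   length (filter (\<lambda>(x, y, z). Q (x @ y @ z)) (weight_two_blocks m))"
proof -
  let ?F = "filter (\<lambda>(x, y, z). Q (x @ y @ z)) (weight_two_blocks m)"
  have "{w \<in> words (3 * m). wt w = 2 \<and> Q w} = (\<lambda>(x, y, z). x @ y @ z) ` set ?F"
  proof (intro equalityI subsetI)
    fix w assume w: "w \<in> {w \<in> words (3 * m). wt w = 2 \<and> Q w}"
    then obtain x y z where xyz: "w = x @ y @ z" "length x = m" "length y = m" "length z = m"
      by (auto simp: words_def elim: split_three_blocks)
    with w have "(x, y, z) \<in> set ?F"
      by (simp add: set_weight_two_blocks)
    then show "w \<in> (\<lambda>(x, y, z). x @ y @ z) ` set ?F"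
      by (rule rev_image_eqI) (simp add: xyz)
  qed (auto simp: set_weight_two_blocks words_def)
  moreover have "inj_on (\<lambda>(x, y, z). x @ y @ z) (set ?F)"
    by (auto simp: inj_on_def set_weight_two_blocks)
  ultimately have "card {w \<in> words (3 * m). wt w = 2 \<and> Q w} = card (set ?F)"
    by (simp add: card_image)
  also have "\<dots> = length ?F"
    by (rule distinct_card) (simp add: distinct_weight_two_blocks)
  finally show ?thesis .
qed

lemma length_filter_product:
  "length (filter P (List.product xs ys)) = (\<Sum>x \<leftarrow> xs. length (filter (\<lambda>y. P (x, y)) ys))"
  by (induction xs) (simp_all add: filter_map o_def)

lemma length_filter_guarded:
  assumes "\<And>x. x \<in> set xs \<Longrightarrow> P x \<longleftrightarrow> c \<and> Q x"
  shows "length (filter P xs) = (if c then length (filter Q xs) else 0)"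
  using assms by (induction xs) auto

lemma sum_list_map_const_on:
  assumes "\<And>x. x \<in> set xs \<Longrightarrow> f x = c"
  shows "(\<Sum>x \<leftarrow> xs. f x) = length xs * (c :: nat)"
  using assms by (induction xs) auto

lemma length_filter_weight_two_blocks:
  "length (filter P (weight_two_blocks m)) =
     length (filter (\<lambda>x. P (x, zero_word m, zero_word m)) (weight_two m)) +
     length (filter (\<lambda>y. P (zero_word m, y, zero_word m)) (weight_two m)) +
     length (filter (\<lambda>z. P (zero_word m, zero_word m, z)) (weight_two m)) +
     (\<Sum>x \<leftarrow> weight_one m. length (filter (\<lambda>y. P (x, y, zero_word m)) (weight_one m))) +
     (\<Sum>x \<leftarrow> weight_one m. length (filter (\<lambda>z. P (x, zero_word m, z)) (weight_one m))) +
     (\<Sum>y \<leftarrow> weight_one m. length (filter (\<lambda>z. P (zero_word m, y, z)) (weight_one m)))"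
  by (simp add: weight_two_blocks_def filter_map o_def length_filter_product)

(* C8 is the extended Hamming code; inC8 is its description by four parity checks
   (each check is a codeword of weight 4 or 8, C8 being self-dual). *)
fun inC8 :: "bool list \<Rightarrow> bool" where
  "inC8 [a, b, c, d, e, f, g, h] \<longleftrightarrow>
     even (wt [b, f, g, h]) \<and> even (wt [c, e, f, g]) \<and> even (wt [d, e, g, h]) \<and>
     even (wt [a, b, c, d, e, f, g, h])"
| "inC8 _ \<longleftrightarrow> False"

lemma inC8_even: "inC8 s \<Longrightarrow> even (wt s)"
  by (cases s rule: inC8.cases) simp_all

(* The generators listed in the definition of C8; the first four form a basis. *)
definition C8_gens :: "bool list list" where
  "C8_gens = replicate 8 True # map (\<lambda>k. shift7 k w00101110) [0..<7]"

lemma C8_span_gens: "C8 = gf2_span 8 (set C8_gens)"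
  unfolding C8_def C8_gens_def by (rule arg_cong[where f = "gf2_span 8"]) auto

lemma length_C8_gens: "g \<in> set C8_gens \<Longrightarrow> length g = 8"
  by (auto simp: C8_gens_def shift7_def w00101110_def)

lemma foldr_wadd_in_span:
  "set gs \<subseteq> G \<Longrightarrow> foldr wadd gs (zero_word n) \<in> gf2_span n G"
  by (induction gs) (auto intro: gf2_span.intros)

lemma set_subseqs_subset: "ys \<in> set (subseqs xs) \<Longrightarrow> set ys \<subseteq> set xs"
  by (induction xs arbitrary: ys) (auto simp: Let_def, blast)

lemma C8_gens_closed:
  "\<forall>g \<in> set C8_gens. \<forall>s \<in> set (all_words 8). inC8 s \<longrightarrow> inC8 (wadd g s)"
  by code_simp

lemma C8_basis_spanning:
  assumes "length s = 8" and "inC8 s"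
  shows "\<exists>gs \<in> set (subseqs (take 4 C8_gens)). foldr wadd gs (zero_word 8) = s"
proof -
  have "\<forall>s \<in> set (all_words 8). inC8 s \<longrightarrow>
     (\<exists>gs \<in> set (subseqs (take 4 C8_gens)). foldr wadd gs (zero_word 8) = s)"
    by code_simp
  with assms show ?thesis
    by (auto simp only: set_all_words words_def mem_Collect_eq)
qed

lemma C8_iff: "s \<in> C8 \<longleftrightarrow> length s = 8 \<and> inC8 s"
proof
  assume "s \<in> C8"
  then have "s \<in> gf2_span 8 (set C8_gens)" by (simp add: C8_span_gens)
  then show "length s = 8 \<and> inC8 s"
  proof induction
    case zero
    show ?case by (simp add: numeral_eq_Suc)
  next
    case (add g v)
    have v: "v \<in> set (all_words 8)"
      using add.IH by (simp add: set_all_words words_def)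
    have "inC8 (wadd g v)"
      using C8_gens_closed add.hyps(1) v add.IH by blast
    moreover have "length g = 8"
      using add.hyps(1) by (rule length_C8_gens)
    ultimately show ?case
      using add.IH by simp
  qed
next
  assume "length s = 8 \<and> inC8 s"
  then obtain gs where gs: "gs \<in> set (subseqs (take 4 C8_gens))"
    and gs_sum: "foldr wadd gs (zero_word 8) = s"
    using C8_basis_spanning by blast
  have "set gs \<subseteq> set C8_gens"
    using set_subseqs_subset[OF gs] set_take_subset[of 4 C8_gens] by blast
  then have "foldr wadd gs (zero_word 8) \<in> gf2_span 8 (set C8_gens)"
    by (rule foldr_wadd_in_span)
  then show "s \<in> C8"
    by (simp add: gs_sum C8_span_gens)
qed

lemma length_weight_one_8: "length (weight_one 8) = 8"
  by code_simp

lemma length_weight_two_8: "length (weight_two 8) = 28"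
  by code_simp

lemma C8_unit_hits:
  assumes "length s = 8" and "odd (wt s)"
  shows "length (filter (\<lambda>e. inC8 (wadd s e)) (weight_one 8)) = 1"
proof -
  have "\<forall>s \<in> set (all_words 8). odd (wt s) \<longrightarrow>
          length (filter (\<lambda>e. inC8 (wadd s e)) (weight_one 8)) = 1"
    by code_simp
  from this[rule_format, of s] assms show ?thesis
    by (simp add: set_all_words words_def)
qed

lemma C8_pair_hits:
  assumes "length s = 8" and "even (wt s)"
  shows "length (filter (\<lambda>e. inC8 (wadd s e)) (weight_two 8)) = (if inC8 s then 0 else 4)"
proof -
  have "\<forall>s \<in> set (all_words 8). even (wt s) \<longrightarrow>
          length (filter (\<lambda>e. inC8 (wadd s e)) (weight_two 8)) = (if inC8 s then 0 else 4)"
    by code_simp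
  from this[rule_format, of s] assms show ?thesis
    by (simp add: set_all_words words_def)
qed

(* Consequence of C8_unit_hits: for s of even weight and each weight-one y, the word
   s + y has odd weight and so exactly one weight-one z gives s + y + z \<in> C8. *)
lemma C8_two_unit_hits:
  assumes s: "length s = 8" "even (wt s)"
  shows "(\<Sum>y \<leftarrow> weight_one 8. length (filter (\<lambda>z. inC8 (wadd s (wadd y z))) (weight_one 8))) = 8"
proof -
  have "length (filter (\<lambda>z. inC8 (wadd s (wadd y z))) (weight_one 8)) = 1"
    if "y \<in> set (weight_one 8)" for y
  proof -
    from that have y: "length y = 8" "wt y = 1" by (simp_all add: mem_weight_one)
    with s have "length (filter (\<lambda>z. inC8 (wadd (wadd s y) z)) (weight_one 8)) = 1"
      by (intro C8_unit_hits) (simp_all add: even_wt_wadd)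
    then show ?thesis by (simp add: wadd_assoc)
  qed
  then have "(\<Sum>y \<leftarrow> weight_one 8. length (filter (\<lambda>z. inC8 (wadd s (wadd y z))) (weight_one 8))) =
             (\<Sum>y \<leftarrow> weight_one 8. (1::nat))"
    by (intro arg_cong[where f = sum_list] map_cong) simp_all
  also have "\<dots> = 8"
    by (simp add: sum_list_triv length_weight_one_8)
  finally show ?thesis .
qed

lemma B8_iff: "x \<in> B8 \<longleftrightarrow> length x = 8 \<and> even (wt x)"
  by (simp add: B8_def even_words_def words_def)

lemma Lcode_blocks:
  assumes "length x = 8" "length y = 8" "length c = 8"
  shows "x @ y @ c \<in> Lcode \<longleftrightarrow> even (wt x) \<and> even (wt y) \<and> inC8 (wadd y c)"
proof
  assume "x @ y @ c \<in> Lcode"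
  then obtain x' y' z where eq: "x @ y @ c = x' @ y' @ wadd y' z"
    and mem: "x' \<in> B8" "y' \<in> B8" "z \<in> C8"
    unfolding Lcode_def by blast
  from mem have "length x' = 8" "length y' = 8" "length z = 8"
    by (auto simp: B8_iff C8_iff)
  with eq assms have "x = x'" "y = y'" "c = wadd y' z"
    by auto
  with mem \<open>length y' = 8\<close> \<open>length z = 8\<close> show "even (wt x) \<and> even (wt y) \<and> inC8 (wadd y c)"
    by (simp add: wadd_cancel B8_iff C8_iff)
next
  assume h: "even (wt x) \<and> even (wt y) \<and> inC8 (wadd y c)"
  have "x @ y @ c = x @ y @ wadd y (wadd y c)"
    using assms by (simp add: wadd_cancel)
  moreover have "x \<in> B8" "y \<in> B8" "wadd y c \<in> C8"
    using h assms by (auto simp: B8_iff C8_iff)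
  ultimately show "x @ y @ c \<in> Lcode"
    unfolding Lcode_def by blast
qed

lemma Lcode_even_words: "Lcode \<subseteq> even_words 24"
proof
  fix w assume "w \<in> Lcode"
  then obtain x y z where w: "w = x @ y @ wadd y z" and mem: "x \<in> B8" "y \<in> B8" "z \<in> C8"
    unfolding Lcode_def by blast
  from mem have l: "length x = 8" "length y = 8" "length z = 8" and "even (wt z)"
    by (auto simp: B8_iff C8_iff inC8_even)
  with mem have "even (wt (wadd y z))"
    by (simp add: even_wt_wadd B8_iff)
  with w l mem show "w \<in> even_words 24"
    by (simp add: even_words_def words_def B8_iff)
qed

(* For a vertex a @ b @ c and a block triple (x, y, z), membership of the neighbour
   (a + x) @ (b + y) @ (c + z) in L depends only on the parities pa, pb of a, b and
   on s = b + c. *)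
definition lands_in_L :: "bool \<Rightarrow> bool \<Rightarrow> bool list \<Rightarrow> bool list \<times> bool list \<times> bool list \<Rightarrow> bool" where
  "lands_in_L pa pb s =
     (\<lambda>(x, y, z). (pa \<longleftrightarrow> even (wt x)) \<and> (pb \<longleftrightarrow> even (wt y)) \<and> inC8 (wadd s (wadd y z)))"

lemma neighbour_in_Lcode:
  assumes "length a = 8" "length b = 8" "length c = 8"
    and "length x = 8" "length y = 8" "length z = 8"
  shows "wadd (a @ b @ c) (x @ y @ z) \<in> Lcode \<longleftrightarrow>
         lands_in_L (even (wt a)) (even (wt b)) (wadd b c) (x, y, z)"
proof -
  have "wadd (a @ b @ c) (x @ y @ z) = wadd a x @ wadd b y @ wadd c z"
    using assms by (simp add: wadd_append)
  moreover have "wadd (wadd b y) (wadd c z) = wadd (wadd b c) (wadd y z)"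
    by (metis wadd_assoc wadd_comm)
  ultimately show ?thesis
    using assms by (simp add: Lcode_blocks even_wt_wadd lands_in_L_def)
qed

(* Only block types preserving both
   parities contribute: for pa and pb this is 28 + 0 if s \<in> C8 and 0 + 2 * 4
   otherwise; for pa, \<not> pb it is the (0,1,1) type with 8 * 1; for \<not> pa (then
   s has odd weight) it is a (1,1,0) or (1,0,1) type with 8 * 1. *)
lemma count_landing_blocks:
  assumes s: "length s = 8" and par: "even (wt s) \<longleftrightarrow> pa"
  shows "length (filter (lands_in_L pa pb s) (weight_two_blocks 8)) =
         (if pa \<and> pb \<and> inC8 s then 28 else 8)"
proof -
  let ?P = "lands_in_L pa pb s" and ?Z = "zero_word 8" and ?U1 = "weight_one 8" and ?U2 = "weight_two 8"
  let ?hits = "\<lambda>E. length (filter (\<lambda>e. inC8 (wadd s e)) E)"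
  note simps = lands_in_L_def mem_weight_one mem_weight_two wadd_zero wadd_zero_left s
  have "length (filter (\<lambda>x. ?P (x, ?Z, ?Z)) ?U2) =
        (if pa \<and> pb \<and> inC8 s then length (filter (\<lambda>_. True) ?U2) else 0)"
    by (rule length_filter_guarded) (simp add: simps)
  moreover have "length (filter (\<lambda>y. ?P (?Z, y, ?Z)) ?U2) = (if pa \<and> pb then ?hits ?U2 else 0)"
    by (rule length_filter_guarded) (simp add: simps)
  moreover have "length (filter (\<lambda>z. ?P (?Z, ?Z, z)) ?U2) = (if pa \<and> pb then ?hits ?U2 else 0)"
    by (rule length_filter_guarded) (simp add: simps)
  moreover have "(\<Sum>x \<leftarrow> ?U1. length (filter (\<lambda>y. ?P (x, y, ?Z)) ?U1)) =
                 length ?U1 * (if \<not> pa \<and> \<not> pb then ?hits ?U1 else 0)"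
    by (intro sum_list_map_const_on length_filter_guarded) (simp add: simps)
  moreover have "(\<Sum>x \<leftarrow> ?U1. length (filter (\<lambda>z. ?P (x, ?Z, z)) ?U1)) =
                 length ?U1 * (if \<not> pa \<and> pb then ?hits ?U1 else 0)"
    by (intro sum_list_map_const_on length_filter_guarded) (simp add: simps)
  moreover have "(\<Sum>y \<leftarrow> ?U1. length (filter (\<lambda>z. ?P (?Z, y, z)) ?U1)) =
      (if pa \<and> \<not> pb then (\<Sum>y \<leftarrow> ?U1. length (filter (\<lambda>z. inC8 (wadd s (wadd y z))) ?U1)) else 0)"
    by (cases "pa \<and> \<not> pb") (auto simp: simps intro!: arg_cong[where f = sum_list] map_cong)
  ultimately have "length (filter ?P (weight_two_blocks 8)) =
      (if pa \<and> pb \<and> inC8 s then 28 else 0) + 2 * (if pa \<and> pb then ?hits ?U2 else 0) +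
      (if \<not> pa then 8 * ?hits ?U1 else 0) +
      (if pa \<and> \<not> pb then (\<Sum>y \<leftarrow> ?U1. length (filter (\<lambda>z. inC8 (wadd s (wadd y z))) ?U1)) else 0)"
    by (simp add: length_filter_weight_two_blocks length_weight_one_8 length_weight_two_8)
  then show ?thesis
    using par C8_unit_hits[OF s] C8_pair_hits[OF s] C8_two_unit_hits[OF s]
    by (cases pa; cases pb) auto
qed

lemma Lcode_neighbours:
  assumes v: "v \<in> even_words 24"
  shows "card {u \<in> even_words 24. halved_adj v u \<and> u \<in> Lcode} = (if v \<in> Lcode then 28 else 8)"
proof -
  have lv: "length v = 3 * 8" and ev: "even (wt v)"
    using v by (auto simp: even_words_def words_def)
  obtain a b c where v_eq: "v = a @ b @ c"
    and l: "length a = 8" "length b = 8" "length c = 8"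
    using lv by (rule split_three_blocks)
  let ?P = "lands_in_L (even (wt a)) (even (wt b)) (wadd b c)"
  have "card {u \<in> even_words 24. halved_adj v u \<and> u \<in> Lcode} =
        card {w \<in> words (3 * 8). wt w = 2 \<and> wadd v w \<in> Lcode}"
    using halved_cube_neighbours[OF v] by simp
  also have "\<dots> = length (filter (\<lambda>(x, y, z). wadd v (x @ y @ z) \<in> Lcode) (weight_two_blocks 8))"
    by (rule card_weight_two_words)
  also have "\<dots> = length (filter ?P (weight_two_blocks 8))"
    using neighbour_in_Lcode[OF l] v_eq
    by (intro arg_cong[where f = length] filter_cong) (auto simp: set_weight_two_blocks)
  also have "\<dots> = (if even (wt a) \<and> even (wt b) \<and> inC8 (wadd b c) then 28 else 8)"
  proof (rule count_landing_blocks)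
    show "length (wadd b c) = 8" using l by simp
    show "even (wt (wadd b c)) \<longleftrightarrow> even (wt a)"
      using ev l by (simp add: v_eq even_wt_wadd)
  qed
  also have "\<dots> = (if v \<in> Lcode then 28 else 8)"
    using l by (simp add: v_eq Lcode_blocks)
  finally show ?thesis .
qed

(* The halved cube on even words of length 24 is regular of degree 276 = 24 choose 2. *)
lemma halved_cube_degree_24:
  assumes "v \<in> even_words 24"
  shows "card {u \<in> even_words 24. halved_adj v u} = 276"
  using halved_cube_neighbours[OF assms, of "\<lambda>_. True"] card_weight_two_words[of 8 "\<lambda>_. True"]
  by (simp add: weight_two_blocks_def length_weight_one_8 length_weight_two_8)

lemma Lcode_non_neighbours:
  assumes v: "v \<in> even_words 24"
  shows "card {u \<in> even_words 24. halved_adj v u \<and> u \<notin> Lcode} = (if v \<in> Lcode then 248 else 268)"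
proof -
  let ?N = "{u \<in> even_words 24. halved_adj v u}"
  have "{u \<in> even_words 24. halved_adj v u \<and> u \<notin> Lcode} = ?N - {u \<in> ?N. u \<in> Lcode}"
    by blast
  also have "card \<dots> = card ?N - card {u \<in> ?N. u \<in> Lcode}"
    using finite_even_words by (intro card_Diff_subset) auto
  finally show ?thesis
    using halved_cube_degree_24[OF v] Lcode_neighbours[OF v] by (simp add: conj_assoc)
qed

theorem lemma5:
  shows "Lcode \<subseteq> even_words 24 \<and>
         perfect_coloring (even_words 24) halved_adj Lcode 28 248 8 268"
  unfolding perfect_coloring_def
  using Lcode_even_words Lcode_neighbours Lcode_non_neighbours by auto

end
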